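(* For every $\varepsilon>0$ there exists a positive integer $L$ such that for all sufficiently large $N$, $$\sum_{k=L}^N P\big(R_{k,N}\ge N^{1-r}\big)<\varepsilon.$$
   Context: Fix $r\in(0,1)$. Multitype Yule process: at time $0$ a single individual of type $1$ is born; no deaths; each individual independently gives birth at rate $1$; a newborn has, independently, its parent's type with probability $1-r$ and otherwise a brand-new type. Individuals are numbered in order of birth (the initial one is the 1st); if the $k$-th individual born has a type different from its parent, that type is called type $k$. $T_N$ is the time the population reaches size $N$, and $R_{k,N}$ is the number of type-$k$ individuals at time $T_N$. *)

theory Defs
  imports "HOL-Probability.Probability"
begin

text \<open>Embedded jump chain of the multitype Yule process.  The state is the list of
types of the individuals in birth order (the i-th entry, 0-based, is the type of the
(i+1)-th individual).  In a Yule process with unit birth rates the parent of the next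
newborn is uniform among the current individuals; the newborn copies the parent's type
with probability 1-r and otherwise gets a new type, labelled by its birth index.\<close>

definition yule_step :: "real \<Rightarrow> nat list \<Rightarrow> nat list pmf" where
  "yule_step r ts =
     pmf_of_set {..<length ts} \<bind> (\<lambda>j.
     bernoulli_pmf (1 - r) \<bind> (\<lambda>b.
     return_pmf (ts @ [if b then ts ! j else Suc (length ts)])))"

text \<open>yule_pop r n: the list of types at the moment the population has size n+1.\<close>
fun yule_pop :: "real \<Rightarrow> nat \<Rightarrow> nat list pmf" where
  "yule_pop r 0 = return_pmf [1]"
| "yule_pop r (Suc n) = yule_pop r n \<bind> yule_step r"

definition yule_at :: "real \<Rightarrow> nat \<Rightarrow> nat list pmf" where
  "yule_at r N = yule_pop r (N - 1)"

definition R_count :: "nat \<Rightarrow> nat list \<Rightarrow> nat" where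
  "R_count k ts = count_list ts k"

end

(* Fix p with a = p (1 - r) \<ge> 2 and follow the rising factorial R^(p) = R (R + 1) ... (R + p - 1)
   of the number R of type-k individuals.  While the population has n \<ge> k members, the next
   birth increases R with probability (1 - r) R / n, and (R + 1)^(p) - R^(p) = p R^(p) / R, so the
   expectation of R^(p) is multiplied by exactly 1 + a / n \<le> ((n + 1) / n)^a.  When the population
   reaches size k, type k has at most one member; hence E (R_{k,N})^(p) \<le> p! (N / k)^a, and Markov's
   inequality together with R^(p) \<ge> R^p gives P (R_{k,N} \<ge> N^(1 - r)) \<le> p! k^(-a).  This bound
   is uniform in N and summable in k, so a tail of its series provides L. *)

theory Submission
  imports Defs
begin

lemma one_plus_mult_le_powr:
  fixes a x :: real
  assumes "1 \<le> a" and "0 \<le> x"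
  shows "1 + a * x \<le> (1 + x) powr a"
proof -
  let ?g = "\<lambda>y::real. y powr a - a * y"
  have "?g 1 \<le> ?g (1 + x)"
  proof (rule DERIV_nonneg_imp_increasing_open[of 1 "1 + x"])
    show "1 \<le> 1 + x" using assms by simp
    show "continuous_on {1..1 + x} ?g" by (intro continuous_intros) auto
  next
    fix y :: real
    assume y: "1 < y" "y < 1 + x"
    have "DERIV ?g y :> a * (y powr (a - 1) - 1)"
      using y by (auto intro!: derivative_eq_intros simp: algebra_simps)
    moreover have "0 \<le> a * (y powr (a - 1) - 1)"
      using y assms by (simp add: ge_one_powr_ge_zero)
    ultimately show "\<exists>d. DERIV ?g y :> d \<and> 0 \<le> d" by blast
  qed
  then show ?thesis by (simp add: algebra_simps)
qed

lemma power_le_pochhammer: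
  fixes x :: real
  assumes "0 \<le> x"
  shows "x ^ p \<le> pochhammer x p"
proof (induction p)
  case (Suc p)
  have "x ^ p * x \<le> pochhammer x p * (x + real p)"
    using Suc assms by (intro mult_mono) (auto intro: order_trans[OF zero_le_power])
  then show ?case by (simp add: pochhammer_Suc mult.commute)
qed simp

lemma mult_pochhammer_plus_one:
  "a * pochhammer (a + 1) p = (a + of_nat p) * pochhammer a p"
  by (metis pochhammer_rec pochhammer_rec')

lemma count_list_eq_card: "count_list xs x = card {i. i < length xs \<and> xs ! i = x}"
  by (simp add: count_list_eq_length_filter length_filter_conv_card eq_commute)

definition pochhammer_count :: "nat \<Rightarrow> nat \<Rightarrow> nat list \<Rightarrow> real" where
  "pochhammer_count k p ts = pochhammer (real (count_list ts k)) p"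

lemma pochhammer_count_nonneg: "0 \<le> pochhammer_count k p ts"
  by (simp add: pochhammer_count_def pochhammer_of_nat)

lemma sum_pochhammer_count_copy:
  "(\<Sum>j<length ts. pochhammer_count k p (ts @ [ts ! j])) =
     (real (length ts) + real p) * pochhammer_count k p ts"
proof -
  define n where "n = length ts"
  define m where "m = count_list ts k"
  define I where "I = {j. j < n \<and> ts ! j = k}"
  have "I \<subseteq> {..<n}" by (auto simp: I_def)
  moreover have card_I: "card I = m"
    by (simp add: I_def m_def n_def count_list_eq_card)
  ultimately have card_not_I: "card ({..<n} - I) = n - m"
    by (simp add: card_Diff_subset finite_subset)
  have "m \<le> n" by (simp add: m_def n_def count_le_length)
  have "(\<Sum>j<n. pochhammer_count k p (ts @ [ts ! j])) =
        (\<Sum>j\<in>I. pochhammer_count k p (ts @ [ts ! j])) +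
        (\<Sum>j\<in>{..<n} - I. pochhammer_count k p (ts @ [ts ! j]))"
    using sum.subset_diff[OF \<open>I \<subseteq> {..<n}\<close>] by (simp add: add.commute)
  also have "\<dots> = (\<Sum>j\<in>I. pochhammer (real m + 1) p) +
                    (\<Sum>j\<in>{..<n} - I. pochhammer (real m) p)"
    by (intro arg_cong2[where f = "(+)"] sum.cong) (auto simp: I_def m_def pochhammer_count_def add.commute)
  also have "\<dots> = real m * pochhammer (real m + 1) p + real (n - m) * pochhammer (real m) p"
    by (simp add: card_I card_not_I)
  also have "\<dots> = (real n + real p) * pochhammer (real m) p"
    using mult_pochhammer_plus_one[of "real m" p] \<open>m \<le> n\<close>
    by (simp add: algebra_simps)
  finally show ?thesis by (simp add: n_def m_def pochhammer_count_def)
qed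

lemma set_pmf_yule_step:
  assumes "ts \<noteq> []" and "us \<in> set_pmf (yule_step r ts)"
  shows "(\<exists>j<length ts. us = ts @ [ts ! j]) \<or> us = ts @ [Suc (length ts)]"
proof -
  have "set_pmf (pmf_of_set {..<length ts}) = {..<length ts}"
    using assms(1) by (intro set_pmf_of_set) auto
  then show ?thesis
    using assms(2) by (auto simp: yule_step_def split: if_splits)
qed

lemma set_pmf_yule_pop:
  assumes "ts \<in> set_pmf (yule_pop r n)"
  shows "length ts = Suc n \<and> (\<forall>i<length ts. ts ! i \<le> Suc i)"
  using assms
proof (induction n arbitrary: ts)
  case (Suc n)
  then obtain us where us: "us \<in> set_pmf (yule_pop r n)" "ts \<in> set_pmf (yule_step r us)"
    by auto
  with Suc.IH have len: "length us = Suc n" and le: "\<forall>i<length us. us ! i \<le> Suc i"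
    by auto
  then have "us \<noteq> []" by auto
  with set_pmf_yule_step us(2)
  consider j where "j < length us" "ts = us @ [us ! j]" | "ts = us @ [Suc (length us)]"
    by blast
  then show ?case
  proof cases
    case (1 j)
    then have "us ! j \<le> Suc (length us)" using le by fastforce
    with 1 le len show ?thesis by (auto simp: nth_append less_Suc_eq)
  next
    case 2
    with le len show ?thesis by (auto simp: nth_append less_Suc_eq)
  qed
qed simp

lemma count_list_length_le_one:
  assumes "\<forall>i<length ts. ts ! i \<le> Suc i"
  shows "count_list ts (length ts) \<le> 1"
proof -
  have "{i. i < length ts \<and> ts ! i = length ts} \<subseteq> {length ts - 1}"
    using assms by fastforce
  then have "card {i. i < length ts \<and> ts ! i = length ts} \<le> card {length ts - 1}"
    by (intro card_mono) auto
  then show ?thesis by (simp add: count_list_eq_card)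
qed

lemma nn_integral_pochhammer_count_yule_step:
  assumes "ts \<noteq> []" and "k \<le> length ts" and "0 \<le> r" "r \<le> 1"
  shows "(\<integral>\<^sup>+us. pochhammer_count k p us \<partial>yule_step r ts)
         = ennreal ((1 + real p * (1 - r) / real (length ts)) * pochhammer_count k p ts)"
proof -
  define n where "n = length ts"
  let ?F = "pochhammer_count k p"
  have "n > 0" using assms(1) by (simp add: n_def)
  have fresh: "?F (ts @ [Suc (length ts)]) = ?F ts"
    using assms(2) by (simp add: pochhammer_count_def)
  have "(\<integral>\<^sup>+us. ?F us \<partial>yule_step r ts)
     = (\<integral>\<^sup>+j. ennreal ((1 - r) * ?F (ts @ [ts ! j]) + r * ?F ts) \<partial>pmf_of_set {..<n})"
    using assms(3,4)
    by (simp add: yule_step_def n_def fresh pochhammer_count_nonneg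
        ennreal_mult'' ennreal_plus[symmetric] mult.commute)
  also have "\<dots> = (\<Sum>j<n. ennreal ((1 - r) * ?F (ts @ [ts ! j]) + r * ?F ts)) / real n"
    using \<open>n > 0\<close> by (subst nn_integral_pmf_of_set) (auto simp: ennreal_of_nat_eq_real_of_nat)
  also have "\<dots> = ennreal ((\<Sum>j<n. (1 - r) * ?F (ts @ [ts ! j]) + r * ?F ts) / real n)"
    using \<open>n > 0\<close> assms(3,4)
    by (subst sum_ennreal)
      (auto intro!: divide_ennreal sum_nonneg add_nonneg_nonneg mult_nonneg_nonneg pochhammer_count_nonneg)
  also have "(\<Sum>j<n. (1 - r) * ?F (ts @ [ts ! j]) + r * ?F ts)
      = (1 - r) * ((real n + real p) * ?F ts) + real n * r * ?F ts"
    by (simp add: sum.distrib sum_distrib_left[symmetric] sum_pochhammer_count_copy n_def)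
  also have "\<dots> / real n = (1 + real p * (1 - r) / real n) * ?F ts"
    using \<open>n > 0\<close> by (simp add: field_simps)
  finally show ?thesis by (simp add: n_def)
qed

lemma powr_mult_one_plus_div_le:
  fixes a k n :: real
  assumes "1 \<le> a" and "0 < k" and "0 < n"
  shows "(n / k) powr a * (1 + a / n) \<le> ((n + 1) / k) powr a"
proof -
  have "1 + a / n \<le> (1 + 1 / n) powr a"
    using one_plus_mult_le_powr[of a "1 / n"] assms by simp
  then have "(n / k) powr a * (1 + a / n) \<le> (n / k) powr a * ((n + 1) / n) powr a"
    using assms by (intro mult_left_mono) (auto simp: field_simps)
  also have "\<dots> = ((n + 1) / k) powr a"
    using assms by (simp add: powr_mult[symmetric])
  finally show ?thesis .
qed

lemma pochhammer_count_at_birth_le: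
  assumes "ts \<in> set_pmf (yule_pop r (k - 1))" and "1 \<le> k"
  shows "pochhammer_count k p ts \<le> fact p"
proof -
  from set_pmf_yule_pop[OF assms(1)] assms(2) count_list_length_le_one
  have "count_list ts k \<le> 1" by force
  then consider "count_list ts k = 0" | "count_list ts k = 1" by linarith
  then show ?thesis
    by cases (auto simp: pochhammer_count_def pochhammer_0_left pochhammer_fact[symmetric])
qed

lemma nn_integral_pochhammer_count_yule_pop_le:
  assumes "1 \<le> k" and "0 \<le> r" "r \<le> 1" and "1 \<le> real p * (1 - r)" and "k - 1 \<le> n"
  shows "(\<integral>\<^sup>+ts. pochhammer_count k p ts \<partial>yule_pop r n)
           \<le> ennreal (fact p * (real (Suc n) / real k) powr (real p * (1 - r)))"
  using assms(5)
proof (induction n rule: dec_induct)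
  case base
  have "(\<integral>\<^sup>+ts. pochhammer_count k p ts \<partial>yule_pop r (k - 1))
        \<le> (\<integral>\<^sup>+ts. ennreal (fact p) \<partial>yule_pop r (k - 1))"
    using assms(1)
    by (intro nn_integral_mono_AE) (auto simp: AE_measure_pmf_iff intro!: pochhammer_count_at_birth_le)
  then show ?case using assms(1) by (simp add: measure_pmf.emeasure_space_1)
next
  case (step n)
  define a where "a = real p * (1 - r)"
  define c where "c = 1 + a / real (Suc n)"
  have "0 \<le> c" using assms(4) by (simp add: c_def a_def)
  have "(\<integral>\<^sup>+ts. pochhammer_count k p ts \<partial>yule_pop r (Suc n))
      = (\<integral>\<^sup>+ts. (\<integral>\<^sup>+us. pochhammer_count k p us \<partial>yule_step r ts) \<partial>yule_pop r n)"
    by simp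
  also have "\<dots> = (\<integral>\<^sup>+ts. ennreal (pochhammer_count k p ts) * ennreal c \<partial>yule_pop r n)"
  proof (intro nn_integral_cong_AE, unfold AE_measure_pmf_iff, intro ballI)
    fix ts assume "ts \<in> set_pmf (yule_pop r n)"
    then have len: "length ts = Suc n" by (simp add: set_pmf_yule_pop)
    with step.hyps(1) have "ts \<noteq> []" "k \<le> length ts" by auto
    from nn_integral_pochhammer_count_yule_step[OF this assms(2,3)] len
    have "(\<integral>\<^sup>+us. pochhammer_count k p us \<partial>yule_step r ts)
          = ennreal (c * pochhammer_count k p ts)"
      by (simp add: c_def a_def)
    then show "(\<integral>\<^sup>+us. pochhammer_count k p us \<partial>yule_step r ts)
               = ennreal (pochhammer_count k p ts) * ennreal c"
      using \<open>0 \<le> c\<close> by (simp add: ennreal_mult pochhammer_count_nonneg mult.commute)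
  qed
  also have "\<dots> = (\<integral>\<^sup>+ts. pochhammer_count k p ts \<partial>yule_pop r n) * ennreal c"
    by (simp add: nn_integral_multc)
  also have "\<dots> \<le> ennreal (fact p * (real (Suc n) / real k) powr a) * ennreal c"
    using step.IH by (simp add: a_def mult_right_mono)
  also have "\<dots> = ennreal (fact p * ((real (Suc n) / real k) powr a * c))"
    using \<open>0 \<le> c\<close> by (simp add: ennreal_mult[symmetric])
  also have "\<dots> \<le> ennreal (fact p * (real (Suc (Suc n)) / real k) powr a)"
    using powr_mult_one_plus_div_le[of a "real k" "real (Suc n)"] assms
    by (intro ennreal_leI mult_left_mono) (auto simp: a_def c_def add.commute)
  finally show ?case by (simp add: a_def)
qed

lemma measure_pmf_prob_ge_le:
  fixes M :: "'a pmf" and f :: "'a \<Rightarrow> real"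
  assumes "0 < c" and "0 \<le> B" and "\<And>x. 0 \<le> f x" and "(\<integral>\<^sup>+x. f x \<partial>M) \<le> ennreal B"
  shows "measure_pmf.prob M {x. c \<le> f x} \<le> B / c"
proof -
  have "emeasure M {x. c \<le> f x} = (\<integral>\<^sup>+x. indicator {x. c \<le> f x} x \<partial>M)"
    by simp
  also have "\<dots> \<le> (\<integral>\<^sup>+x. ennreal (f x) * ennreal (1 / c) \<partial>M)"
    using assms(1,3)
    by (intro nn_integral_mono) (auto split: split_indicator simp: ennreal_mult''[symmetric])
  also have "\<dots> = (\<integral>\<^sup>+x. f x \<partial>M) * ennreal (1 / c)"
    by (simp add: nn_integral_multc)
  also have "\<dots> \<le> ennreal B * ennreal (1 / c)"
    using assms(4) by (rule mult_right_mono) simp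
  also have "\<dots> = ennreal (B / c)"
    using assms(1,2) by (simp add: ennreal_mult[symmetric])
  finally show ?thesis
    using assms(1,2) by (simp add: measure_pmf.emeasure_eq_measure)
qed

lemma prob_R_count_ge_le:
  assumes "1 \<le> k" "k \<le> N" and "0 \<le> r" "r \<le> 1" and "1 \<le> real p * (1 - r)"
  shows "measure_pmf.prob (yule_at r N) {ts. real N powr (1 - r) \<le> real (R_count k ts)}
         \<le> fact p / real k powr (real p * (1 - r))"
proof -
  define a where "a = real p * (1 - r)"
  have "0 < real N powr a" using assms(1,2) by simp
  have "{ts. real N powr (1 - r) \<le> real (R_count k ts)}
        \<subseteq> {ts. real N powr a \<le> pochhammer_count k p ts}"
  proof safe
    fix ts assume count: "real N powr (1 - r) \<le> real (R_count k ts)"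
    have "real N powr a = (real N powr (1 - r)) ^ p"
      using assms(1,2) by (simp add: a_def powr_powr powr_realpow[symmetric] mult.commute)
    also have "\<dots> \<le> real (count_list ts k) ^ p"
      using count by (intro power_mono) (auto simp: R_count_def)
    also have "\<dots> \<le> pochhammer_count k p ts"
      by (simp add: pochhammer_count_def power_le_pochhammer)
    finally show "real N powr a \<le> pochhammer_count k p ts" .
  qed
  then have "measure_pmf.prob (yule_at r N) {ts. real N powr (1 - r) \<le> real (R_count k ts)}
      \<le> measure_pmf.prob (yule_pop r (N - 1)) {ts. real N powr a \<le> pochhammer_count k p ts}"
    by (simp add: yule_at_def measure_pmf.finite_measure_mono)
  also have "\<dots> \<le> fact p * (real N / real k) powr a / real N powr a"
    using nn_integral_pochhammer_count_yule_pop_le[of k r p "N - 1"] assms \<open>0 < real N powr a\<close>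
    by (intro measure_pmf_prob_ge_le) (auto simp: a_def pochhammer_count_nonneg)
  also have "\<dots> = fact p / real k powr a"
    using \<open>0 < real N powr a\<close> by (simp add: powr_divide)
  finally show ?thesis by (simp add: a_def)
qed

lemma summable_bound_tail_sum_less:
  fixes f :: "nat \<Rightarrow> real" and g :: "nat \<Rightarrow> nat \<Rightarrow> real"
  assumes "summable f" and "\<And>k. 0 \<le> f k"
    and "\<And>k N. 1 \<le> k \<Longrightarrow> k \<le> N \<Longrightarrow> g k N \<le> f k" and "0 < \<epsilon>"
  shows "\<exists>L>0. \<forall>N. (\<Sum>k=L..N. g k N) < \<epsilon>"
proof -
  obtain L0 where tail: "\<And>L. L0 \<le> L \<Longrightarrow> norm (\<Sum>i. f (i + L)) < \<epsilon>"
    using suminf_exist_split[OF assms(4,1)] by blast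
  define L where "L = Suc L0"
  have "(\<Sum>k=L..N. g k N) < \<epsilon>" for N
  proof -
    have "(\<Sum>k=L..N. g k N) \<le> (\<Sum>k=L..N. f k)"
      by (intro sum_mono assms(3)) (auto simp: L_def)
    also have "\<dots> = (\<Sum>k=L..<Suc N. f k)"
      by (rule sum.cong) auto
    also have "\<dots> = (\<Sum>i=0..<Suc N - L. f (i + L))"
      unfolding sum.atLeastLessThan_shift_0[of f L "Suc N"] by (simp add: comp_def add.commute)
    also have "\<dots> \<le> (\<Sum>i. f (i + L))"
      using assms(1,2) by (intro sum_le_suminf) (auto simp: summable_iff_shift)
    also have "\<dots> < \<epsilon>"
      using tail[of L] by (simp add: L_def)
    finally show ?thesis .
  qed
  then show ?thesis by (auto simp: L_def)
qed

theorem lemma5p1: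
  fixes r :: real
  assumes "0 < r" and "r < 1"
  shows "\<forall>\<epsilon>>0. \<exists>L::nat. L > 0 \<and>
           (\<forall>\<^sub>F N in sequentially.
              (\<Sum>k=L..N. measure_pmf.prob (yule_at r N)
                   {ts. real (R_count k ts) \<ge> real N powr (1 - r)}) < \<epsilon>)"
proof (intro allI impI)
  fix \<epsilon> :: real
  assume "0 < \<epsilon>"
  define p where "p = nat \<lceil>2 / (1 - r)\<rceil>"
  define a where "a = real p * (1 - r)"
  have "2 / (1 - r) \<le> real p"
    unfolding p_def by linarith
  then have "2 \<le> a"
    using assms by (simp add: a_def field_simps)
  have summable: "summable (\<lambda>k. fact p * real k powr - a)"
    using \<open>2 \<le> a\<close> by (intro summable_mult) (simp add: summable_real_powr_iff)
  have bound: "measure_pmf.prob (yule_at r N) {ts. real (R_count k ts) \<ge> real N powr (1 - r)}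
      \<le> fact p * real k powr - a" if "1 \<le> k" "k \<le> N" for k N
    using prob_R_count_ge_le[OF that, of r p] assms \<open>2 \<le> a\<close>
    by (simp add: a_def powr_minus divide_inverse)
  have "\<exists>L>0. \<forall>N. (\<Sum>k=L..N. measure_pmf.prob (yule_at r N)
      {ts. real (R_count k ts) \<ge> real N powr (1 - r)}) < \<epsilon>"
    by (rule summable_bound_tail_sum_less[OF summable]) (use bound \<open>0 < \<epsilon>\<close> in auto)
  then show "\<exists>L::nat. L > 0 \<and> (\<forall>\<^sub>F N in sequentially.
      (\<Sum>k=L..N. measure_pmf.prob (yule_at r N)
         {ts. real (R_count k ts) \<ge> real N powr (1 - r)}) < \<epsilon>)"
    by (blast intro: always_eventually)
qed

end
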